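(* For every $n\ge1$: $F^{\mathrm{(per)}}_{2n}(-1)=0$ if $n$ is even, and $F^{\mathrm{(per)}}_{2n}(-1)=-\dfrac{\mathrm{AV}_n^2}{\mathrm{A}_n}$ if $n$ is odd.
   Context: $F^{\mathrm{(per)}}_{2n}(x) = \sum_{k=1}^n \binom{n+k-2}{k-1}\frac{(2n-1)!\,(2n-k-1)! }{(3 n-2)!\,(n-k)!}x^k$ (boundary loop generating function of the periodic Temperley–Lieb loop model at loop weight 1, size $2n$). $\mathrm{A}_n=\prod_{j=0}^{n-1}\frac{(3j+1)!}{(n+j)!}$ (number of $n\times n$ alternating sign matrices), and for $m\ge0$, $\mathrm{AV}_{2m+1}=\prod_{j=0}^{m-1}(3j+2)\frac{(6j+3)!\,(2j+1)!}{(4j+3)!\,(4j+2)!}$ (number of vertically symmetric alternating sign matrices of size $2m+1$). *)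

theory Defs
  imports Complex_Main
begin

text \<open>Boundary loop generating function of the periodic TL loop model, size 2n:
  F_per n x = F^(per)_{2n}(x).\<close>
definition F_per :: "nat \<Rightarrow> real \<Rightarrow> real" where
  "F_per n x = (\<Sum>k=1..n. real ((n + k - 2) choose (k - 1)) *
      (fact (2*n - 1) * fact (2*n - k - 1)) / (fact (3*n - 2) * fact (n - k)) * x ^ k)"

definition ASM :: "nat \<Rightarrow> real" where
  "ASM n = (\<Prod>j<n. fact (3*j + 1) / fact (n + j))"

text \<open>AV_odd m = AV_{2m+1}, number of vertically symmetric ASMs of size 2m+1.\<close>
definition AV_odd :: "nat \<Rightarrow> real" where
  "AV_odd m = (\<Prod>j<m. real (3*j + 2) * (fact (6*j + 3) * fact (2*j + 1))
                      / (fact (4*j + 3) * fact (4*j + 2)))"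

end

theory Submission
  imports Defs "HOL-Computational_Algebra.Formal_Power_Series"
begin

text \<open>Substituting x = -1 and shifting the summation index, F_per (m+1) (-1) becomes a multiple of
  the alternating convolution \<Sum>j (-1)^j C(m+j,j) C(2m-j,m-j). This is the coefficient of x^m in
  (1+x)^-(m+1) (1-x)^-(m+1) = (1-x^2)^-(m+1), so it vanishes for odd m and equals C(3p,p) for m = 2p.
  For odd n = 2p+1 the remaining ratio of factorials is AV_{2p+1}^2 / A_{2p+1}, which is checked by
  induction on p from the one-step recurrences of both products.\<close>

unbundle fps_syntax

lemma fps_compose_X_power_nth:
  fixes f :: "'a::idom fps"
  assumes "k > 0"
  shows "(f oo fps_X ^ k) $ n = (if k dvd n then f $ (n div k) else 0)"
proof -
  have "(f oo fps_X ^ k) $ n = (\<Sum>i=0..n. if i = n div k \<and> k dvd n then f $ i else 0)"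
    unfolding fps_compose_nth power_mult[symmetric] fps_X_power_nth
    using assms by (intro sum.cong) (auto simp: mult.commute)
  also have "\<dots> = (if k dvd n then f $ (n div k) else 0)"
    by (cases "k dvd n") (simp_all add: sum.delta' div_le_dividend)
  finally show ?thesis .
qed

lemma inverse_one_minus_fps_X_power_compose:
  fixes k n :: nat
  assumes "k > 0"
  shows "inverse ((1 - fps_X) ^ n :: 'a::field fps) oo fps_X ^ k = inverse ((1 - fps_X ^ k) ^ n)"
proof -
  have Xk: "fps_X ^ k $ 0 = (0 :: 'a)"
    using assms by simp
  have "(1 - fps_X :: 'a fps) ^ n oo fps_X ^ k = ((1 - fps_X) oo fps_X ^ k) ^ n"
    by (rule fps_compose_power[OF Xk, symmetric])
  also have "\<dots> = (1 - fps_X ^ k) ^ n"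
    using Xk by (simp add: fps_compose_sub_distrib)
  finally show ?thesis
    by (simp add: fps_inverse_compose[OF Xk])
qed

lemma alternating_binomial_convolution:
  "(\<Sum>j\<le>m. (-1) ^ j * of_nat ((m + j) choose j) * of_nat ((2*m - j) choose (m - j)) :: 'a::field_char_0)
     = (if even m then of_nat ((m + m div 2) choose (m div 2)) else 0)"
proof -
  define G where "G c = inverse ((1 - fps_const c * fps_X) ^ Suc m :: 'a fps)" for c
  have G_nth: "G c $ k = of_nat ((m + k) choose k) * c ^ k" for c k
    unfolding G_def by (subst one_minus_const_fps_X_neg_power') simp_all
  have "(1 - fps_const (-1) * fps_X) * (1 - fps_const 1 * fps_X) = (1 - fps_X ^ 2 :: 'a fps)"
    by (simp add: algebra_simps power2_eq_square flip: fps_const_neg)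
  then have "G (-1) * G 1 = inverse ((1 - fps_X ^ 2) ^ Suc m)"
    unfolding G_def by (simp only: fps_inverse_mult[symmetric] power_mult_distrib[symmetric])
  also have "\<dots> = G 1 oo fps_X ^ 2"
    unfolding G_def fps_const_1_eq_1 mult_1
    by (rule inverse_one_minus_fps_X_power_compose[symmetric]) simp
  finally have "(G (-1) * G 1) $ m = (G 1 oo fps_X ^ 2) $ m"
    by simp
  moreover have "(G (-1) * G 1) $ m
      = (\<Sum>j\<le>m. (-1) ^ j * of_nat ((m + j) choose j) * of_nat ((2*m - j) choose (m - j)))"
    unfolding fps_mult_nth atLeast0AtMost
  proof (intro sum.cong refl)
    fix j assume "j \<in> {..m}"
    then have "m + (m - j) = 2*m - j" by simp
    then show "G (-1) $ j * G 1 $ (m - j)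
        = (-1) ^ j * of_nat ((m + j) choose j) * of_nat ((2*m - j) choose (m - j))"
      by (simp add: G_nth)
  qed
  ultimately show ?thesis
    by (simp add: fps_compose_X_power_nth G_nth)
qed

lemma F_per_Suc_minus_one:
  "F_per (Suc m) (-1) = - (fact (2*m + 1) * fact m / fact (3*m + 1)) *
     (\<Sum>j\<le>m. (-1) ^ j * real ((m + j) choose j) * real ((2*m - j) choose (m - j)))"
proof -
  have "F_per (Suc m) (-1) = (\<Sum>j\<le>m. real ((m + j) choose j) *
      (fact (2*m + 1) * fact (2*m - j)) / (fact (3*m + 1) * fact (m - j)) * (-1) ^ Suc j)"
    unfolding F_per_def atMost_atLeast0 One_nat_def sum.shift_bounds_cl_Suc_ivl
    by (intro sum.cong) (auto simp: numeral_eq_Suc)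
  also have "\<dots> = (\<Sum>j\<le>m. - (fact (2*m + 1) * fact m / fact (3*m + 1)) *
      ((-1) ^ j * real ((m + j) choose j) * real ((2*m - j) choose (m - j))))"
  proof (intro sum.cong refl)
    fix j assume "j \<in> {..m}"
    then have "fact (2*m - j) = fact (m - j) * fact m * real ((2*m - j) choose (m - j))"
      by (subst binomial_fact) (auto simp: diff_diff_right)
    then show "real ((m + j) choose j) * (fact (2*m + 1) * fact (2*m - j))
          / (fact (3*m + 1) * fact (m - j)) * (-1) ^ Suc j
        = - (fact (2*m + 1) * fact m / fact (3*m + 1)) *
          ((-1) ^ j * real ((m + j) choose j) * real ((2*m - j) choose (m - j)))"
      by (simp only:) (simp add: field_simps del: fact_Suc)
  qed
  finally show ?thesis
    by (simp only: sum_distrib_left)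
qed

lemma ASM_pos: "ASM n > 0"
  unfolding ASM_def by (intro prod_pos) auto

lemma ASM_Suc:
  "ASM (Suc n) = ASM n * (fact (3*n + 1) * fact n / (fact (2*n) * fact (2*n + 1)))"
proof -
  define D where "D k = (\<Prod>j<k. fact (k + j) :: real)" for k
  have ASM_eq: "ASM k = (\<Prod>j<k. fact (3*j + 1)) / D k" for k
    unfolding ASM_def D_def by (rule prod_dividef)
  have "fact n * D (Suc n) = (\<Prod>j<Suc (Suc n). fact (n + j) :: real)"
    unfolding D_def prod.lessThan_Suc_shift[of "\<lambda>j. fact (n + j)"] by simp
  also have "\<dots> = D n * fact (2*n) * fact (2*n + 1)"
    unfolding D_def prod.lessThan_Suc by (simp add: mult_2 del: fact_Suc)
  finally have "D (Suc n) = D n * fact (2*n) * fact (2*n + 1) / fact n"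
    by (simp add: nonzero_eq_divide_eq mult.commute del: fact_Suc)
  moreover have "D n \<noteq> 0"
    unfolding D_def by simp
  ultimately show ?thesis
    unfolding ASM_eq prod.lessThan_Suc by (simp del: fact_Suc)
qed

lemma AV_odd_Suc:
  "AV_odd (Suc m) = AV_odd m * (real (3*m + 2) * (fact (6*m + 3) * fact (2*m + 1))
                      / (fact (4*m + 3) * fact (4*m + 2)))"
  unfolding AV_odd_def by simp

lemma AV_odd_squared_step:
  fixes p :: nat
  shows "fact (4*p + 5) * fact (3*p + 3) / (fact (6*p + 7) * fact (p + 1))
       * (fact (6*p + 4) * fact (2*p + 1) / (fact (4*p + 2) * fact (4*p + 3)))
       * (fact (6*p + 7) * fact (2*p + 2) / (fact (4*p + 4) * fact (4*p + 5)))
     = fact (4*p + 1) * fact (3*p) / (fact (6*p + 1) * fact p)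
       * (real (3*p + 2) * (fact (6*p + 3) * fact (2*p + 1)) / (fact (4*p + 3) * fact (4*p + 2))) ^ 2"
proof -
  \<comment> \<open>Opaque names for the base factorials stop the simplifier from unfolding them with
    \<open>fact_Suc\<close>; what remains after cancellation is a polynomial identity in x.\<close>
  define x where "x = real p"
  define F4 where "F4 = (fact (4*p + 1) :: real)"
  define F6 where "F6 = (fact (6*p + 1) :: real)"
  define F3 where "F3 = (fact (3*p) :: real)"
  define F2 where "F2 = (fact (2*p + 1) :: real)"
  define F1 where "F1 = (fact p :: real)"
  have fact_expand:
    "(fact (4*p + 5) :: real) = (4*x+5) * (4*x+4) * (4*x+3) * (4*x+2) * F4"
    "(fact (4*p + 4) :: real) = (4*x+4) * (4*x+3) * (4*x+2) * F4"
    "(fact (4*p + 3) :: real) = (4*x+3) * (4*x+2) * F4"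
    "(fact (4*p + 2) :: real) = (4*x+2) * F4"
    "(fact (6*p + 7) :: real) = (6*x+7) * (6*x+6) * (6*x+5) * (6*x+4) * (6*x+3) * (6*x+2) * F6"
    "(fact (6*p + 4) :: real) = (6*x+4) * (6*x+3) * (6*x+2) * F6"
    "(fact (6*p + 3) :: real) = (6*x+3) * (6*x+2) * F6"
    "(fact (3*p + 3) :: real) = (3*x+3) * (3*x+2) * (3*x+1) * F3"
    "(fact (2*p + 2) :: real) = (2*x+2) * F2"
    "(fact (p + 1) :: real) = (x+1) * F1"
    "real (3*p + 2) = 3*x+2"
    unfolding x_def F4_def F6_def F3_def F2_def F1_def
    by (simp_all add: fact_Suc eval_nat_numeral algebra_simps)
  have "F4 \<noteq> 0" "F6 \<noteq> 0" "F3 \<noteq> 0" "F2 \<noteq> 0" "F1 \<noteq> 0"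
    unfolding F4_def F6_def F3_def F2_def F1_def by simp_all
  moreover have "x \<ge> 0"
    unfolding x_def by simp
  ultimately show ?thesis
    unfolding fact_expand F2_def[symmetric] F3_def[symmetric] F4_def[symmetric] F6_def[symmetric]
      F1_def[symmetric]
    by (simp add: divide_simps power2_eq_square) (simp add: algebra_simps)
qed

lemma AV_odd_squared:
  "AV_odd p ^ 2 = fact (4*p + 1) * fact (3*p) / (fact (6*p + 1) * fact p) * ASM (2*p + 1)"
proof (induction p)
  case 0
  show ?case
    by (simp add: ASM_def AV_odd_def)
next
  case (Suc p)
  have "ASM (2 * Suc p + 1) = ASM (2*p + 1)
      * (fact (6*p + 4) * fact (2*p + 1) / (fact (4*p + 2) * fact (4*p + 3)))
      * (fact (6*p + 7) * fact (2*p + 2) / (fact (4*p + 4) * fact (4*p + 5)))"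
    using ASM_Suc[of "2*p + 1"] ASM_Suc[of "2*p + 2"]
    by (simp add: algebra_simps numeral_eq_Suc del: fact_Suc)
  moreover have "fact (4 * Suc p + 1) * fact (3 * Suc p) / (fact (6 * Suc p + 1) * fact (Suc p))
      = (fact (4*p + 5) * fact (3*p + 3) / (fact (6*p + 7) * fact (p + 1)) :: real)"
    by (simp add: algebra_simps numeral_eq_Suc del: fact_Suc)
  ultimately show ?case
    unfolding AV_odd_Suc power_mult_distrib Suc.IH
    using AV_odd_squared_step[of p] by (simp only: ac_simps)
qed

theorem mainTheorem4:
  fixes n :: nat
  assumes "n \<ge> 1"
  shows "(even n \<longrightarrow> F_per n (-1) = 0) \<and>
         (odd n \<longrightarrow> F_per n (-1) = - ((AV_odd ((n - 1) div 2)) ^ 2 / ASM n))"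
proof -
  obtain m where n: "n = Suc m"
    using assms by (cases n) auto
  note F_per_m = F_per_Suc_minus_one[of m, unfolded alternating_binomial_convolution]
  show ?thesis
  proof (intro conjI impI)
    assume "even n"
    then show "F_per n (-1) = 0"
      unfolding n F_per_m by simp
  next
    assume "odd n"
    then obtain p where m: "m = 2*p"
      using n by (auto elim: evenE)
    have "m + m div 2 = 3*p" "m div 2 = p" "2*m + 1 = 4*p + 1" "3*m + 1 = 6*p + 1"
      using m by simp_all
    then have "F_per n (-1) = - (fact (4*p + 1) * fact (2*p) / fact (6*p + 1) * real ((3*p) choose p))"
      unfolding n F_per_m using m by simp
    also have "fact (4*p + 1) * fact (2*p) / fact (6*p + 1) * real ((3*p) choose p)
        = fact (4*p + 1) * fact (3*p) / (fact (6*p + 1) * fact p)"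
      by (simp add: binomial_fact field_simps del: fact_Suc)
    also have "\<dots> = AV_odd p ^ 2 / ASM (2*p + 1)"
      using ASM_pos[of "2*p + 1"] unfolding AV_odd_squared by (simp add: field_simps del: fact_Suc)
    finally show "F_per n (-1) = - ((AV_odd ((n - 1) div 2)) ^ 2 / ASM n)"
      using n m by simp
  qed
qed

end
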